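(* For every integer $j\ge1$, the graph $K_{2j+4}^{(j+2)*}$ on $n=2j+4$ vertices satisfies \[\lambda_1-\lambda_{n-j}=\frac{(2j+5)+\sqrt{4j^2+16j+17}}{2},\] and hence \[s_{0,j}\ge\frac{(2j+5)+\sqrt{4j^2+16j+17}}{4(j+2)}.\]
   Context: $K_m^{t*}$ denotes the complete graph $K_m$ with loops added at exactly $t$ of its vertices. Graphs with loops are identified with their symmetric $(0,1)$ adjacency matrices (diagonal entry $1$ iff loop), eigenvalues listed $\lambda_1\ge\cdots\ge\lambda_n$. For a simple graph $G$ on $n$ vertices, ${\rm spread}_{i,j}(G)=\lambda_{i+1}(G)-\lambda_{n-j}(G)$; ${\rm spread}_{i,j}(n)$ is its maximum over simple graphs on $n$ vertices and $s_{i,j}=\lim_{n\to\infty}{\rm spread}_{i,j}(n)/n$ (known to exist, and known to equal the analogous limit taken over graphs with at most one loop per vertex). *)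

theory Defs
  imports "Jordan_Normal_Form.Char_Poly" "HOL-Computational_Algebra.Polynomial" "HOL-Library.Multiset"
begin

text \<open>For real symmetric matrices (adjacency matrices)
  the characteristic polynomial splits over the reals, so this list has length n.\<close>
definition eigs :: "real mat \<Rightarrow> real list" where
  "eigs A = rev (sorted_list_of_multiset (proots (char_poly A)))"

text \<open>lambda_k(A), 1-indexed: lambda_1 >= lambda_2 >= ... >= lambda_n.\<close>
definition lam :: "real mat \<Rightarrow> nat \<Rightarrow> real" where
  "lam A k = eigs A ! (k - 1)"

text \<open>Adjacency matrix of K_m^{t*}: complete graph on m vertices with loops at
  the vertices 0..t-1 (exactly t vertices when t <= m).\<close>
definition Kloop :: "nat \<Rightarrow> nat \<Rightarrow> real mat" where
  "Kloop m t = mat m m (\<lambda>(a, b). if a \<noteq> b then 1 else if a < t then 1 else 0)"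

text \<open>Symmetric (0,1) matrices of size n: graphs with at most one loop per vertex.\<close>
definition looped_graph_mat :: "nat \<Rightarrow> real mat \<Rightarrow> bool" where
  "looped_graph_mat n A \<longleftrightarrow> A \<in> carrier_mat n n \<and> A\<^sup>T = A \<and>
     (\<forall>a<n. \<forall>b<n. A $$ (a, b) = 0 \<or> A $$ (a, b) = 1)"

definition simple_graph_mat :: "nat \<Rightarrow> real mat \<Rightarrow> bool" where
  "simple_graph_mat n A \<longleftrightarrow> looped_graph_mat n A \<and> (\<forall>a<n. A $$ (a, a) = 0)"

definition spread_ij :: "nat \<Rightarrow> nat \<Rightarrow> real mat \<Rightarrow> real" where
  "spread_ij i j A = lam A (i + 1) - lam A (dim_row A - j)"

definition spread_n :: "nat \<Rightarrow> nat \<Rightarrow> nat \<Rightarrow> real" where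
  "spread_n i j n = Max (spread_ij i j ` {A. simple_graph_mat n A})"

definition spread_loop_n :: "nat \<Rightarrow> nat \<Rightarrow> nat \<Rightarrow> real" where
  "spread_loop_n i j n = Max (spread_ij i j ` {A. looped_graph_mat n A})"

definition s_ij :: "nat \<Rightarrow> nat \<Rightarrow> real" where
  "s_ij i j = lim (\<lambda>n. spread_n i j n / real n)"

end

theory Submission
  imports Defs
begin

text \<open>
  Let \<open>q = j + 2\<close>. Replacing every vertex of \<open>Kloop (2*q) q\<close> by \<open>k\<close> twins gives a graph with at
  most one loop per vertex on \<open>n = 2qk\<close> vertices. Merging a loopless vertex into a twin is a
  similarity that splits off a factor \<open>\<lambda>\<close> of the characteristic polynomial and leaves a
  weighted quotient matrix. Collapsing the blow-up to its \<open>q + 1\<close> classes and, after a shift by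
  \<open>k\<close>, to two classes yields the spectrum \<open>k(2q - 1 \<plusminus> \<surd>(4q\<^sup>2 + 1))/2\<close>, \<open>-k\<close> (\<open>q - 1\<close> times)
  and \<open>0\<close>, so \<open>\<lambda>\<^sub>1 - \<lambda>\<^sub>n\<^sub>-\<^sub>j = k(2q + 1 + \<surd>(4q\<^sup>2 + 1))/2\<close>. For \<open>k = 1\<close> this is the spectral
  claim; dividing by \<open>2qk\<close> and letting \<open>k \<rightarrow> \<infinity>\<close> in the limit over looped graphs bounds \<open>s\<^sub>0\<^sub>,\<^sub>j\<close>.
\<close>

lemma det_mat_2:
  fixes f :: "nat \<times> nat \<Rightarrow> 'a::comm_ring_1"
  shows "det (mat 2 2 f) = f (0,0) * f (1,1) - f (0,1) * f (1,0)"
proof -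
  have "mat 2 2 f \<in> carrier_mat 2 2" by simp
  then show ?thesis
    apply (subst laplace_expansion_column[of _ _ 0])
      apply (auto simp: numeral_2_eq_2 lessThan_Suc cofactor_def)
    apply (subst (1 2) laplace_expansion_column[of _ 1 0])
      apply (auto simp: mat_delete_def cofactor_def)
    done
qed

lemma char_poly_add_smult_one_mat:
  fixes A :: "'a::field_char_0 mat"
  assumes A: "A \<in> carrier_mat n n"
  shows "char_poly (A + c \<cdot>\<^sub>m 1\<^sub>m n) = char_poly A \<circ>\<^sub>p [:-c, 1:]"
proof -
  have "char_matrix (A + c \<cdot>\<^sub>m 1\<^sub>m n) e = char_matrix A (e - c)" for e
    using A by (auto simp: char_matrix_def intro!: eq_matI)
  then have "poly (char_poly (A + c \<cdot>\<^sub>m 1\<^sub>m n)) e = poly (char_poly A \<circ>\<^sub>p [:-c, 1:]) e" for e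
    using A by (simp add: char_poly_matrix[of _ n] poly_pcompose)
  then show ?thesis using poly_eq_poly_eq_iff by blast
qed

lemma char_poly_permute_mat:
  fixes A :: "'a::comm_ring_1 mat"
  assumes A: "A \<in> carrier_mat n n" and \<sigma>: "bij_betw \<sigma> {..<n} {..<n}"
  shows "char_poly (mat n n (\<lambda>(x,y). A $$ (\<sigma> x, \<sigma> y))) = char_poly A"
proof -
  define P :: "'a mat" where "P = mat n n (\<lambda>(i,c). if \<sigma> i = c then 1 else 0)"
  define P' :: "'a mat" where "P' = mat n n (\<lambda>(c,i). if \<sigma> i = c then 1 else 0)"
  have \<sigma>_less: "\<sigma> i < n" if "i < n" for i using \<sigma> that by (auto simp: bij_betw_def)
  have \<sigma>_eq_iff: "\<sigma> i = \<sigma> l \<longleftrightarrow> i = l" if "i < n" "l < n" for i l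
    using \<sigma> that by (auto simp: bij_betw_def inj_on_def)
  have PA: "P * A = mat n n (\<lambda>(i,y). A $$ (\<sigma> i, y))"
    by (rule eq_matI) (use A \<sigma>_less in \<open>auto simp: P_def scalar_prod_def if_distrib[of "\<lambda>x. x * _"] sum.delta cong: if_cong\<close>)
  have PAP': "P * A * P' = mat n n (\<lambda>(x,y). A $$ (\<sigma> x, \<sigma> y))"
    unfolding PA
    by (rule eq_matI) (use A \<sigma>_less in \<open>auto simp: P'_def scalar_prod_def if_distrib[of "\<lambda>x. _ * x"] sum.delta cong: if_cong\<close>)
  have PP': "P * P' = 1\<^sub>m n"
    by (rule eq_matI) (use \<sigma>_less \<sigma>_eq_iff in \<open>auto simp: P_def P'_def scalar_prod_def if_distrib[of "\<lambda>x. _ * x"] sum.delta cong: if_cong\<close>)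
  have P'P: "P' * P = 1\<^sub>m n"
  proof (rule eq_matI)
    fix c d assume c: "c < dim_row (1\<^sub>m n)" and d: "d < dim_col (1\<^sub>m n)"
    have "(P' * P) $$ (c,d) = (\<Sum>i<n. (if \<sigma> i = c then 1 else 0) * (if \<sigma> i = d then 1 else 0 :: 'a))"
      using c d by (simp add: P_def P'_def scalar_prod_def lessThan_atLeast0)
    also have "\<dots> = (\<Sum>e<n. (if e = c then 1 else 0) * (if e = d then 1 else 0 :: 'a))"
      using sum.reindex_bij_betw[OF \<sigma>, of "\<lambda>e. (if e = c then 1 else 0) * (if e = d then 1 else 0 :: 'a)"] by simp
    also have "\<dots> = 1\<^sub>m n $$ (c,d)"
      using c d by (auto simp: if_distrib[of "\<lambda>x. x * _"] sum.delta cong: if_cong)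
    finally show "(P' * P) $$ (c,d) = 1\<^sub>m n $$ (c,d)" .
  qed (auto simp: P_def P'_def)
  have "similar_mat (mat n n (\<lambda>(x,y). A $$ (\<sigma> x, \<sigma> y))) A"
    by (rule similar_matI[of _ _ P P' n]) (use A PP' P'P PAP' in \<open>auto simp: P_def P'_def\<close>)
  then show ?thesis by (rule char_poly_similar)
qed

lemma proots_prod_list_linear: "proots (\<Prod>a\<leftarrow>xs. [:-a, 1::'a::idom:]) = mset xs"
proof (induction xs)
  case (Cons a xs)
  have "proots ([:-a, 1:] * (\<Prod>a\<leftarrow>xs. [:-a, 1:])) = proots [:-a, 1:] + proots (\<Prod>a\<leftarrow>xs. [:-a, 1::'a:])"
    by (rule proots_mult) (auto simp: prod_list_zero_iff)
  then show ?case by (simp add: Cons.IH)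
qed simp

lemma eigs_eqI:
  assumes "\<And>e. poly (char_poly A) e = (\<Prod>a\<leftarrow>xs. e - a)"
  shows "eigs A = rev (sort xs)"
proof -
  have "poly (\<Prod>a\<leftarrow>xs. [:-a, 1:]) e = (\<Prod>a\<leftarrow>xs. e - a)" for e
    by (induction xs) (auto simp: algebra_simps)
  then have "char_poly A = (\<Prod>a\<leftarrow>xs. [:-a, 1:])"
    using assms poly_eq_poly_eq_iff by (metis ext)
  then show ?thesis
    by (simp add: eigs_def proots_prod_list_linear)
qed

text \<open>Adjacency matrices of blow-ups (unit weights) and their quotient matrices (class sizes as
  weights) are both of this form.\<close>

definition class_mat :: "nat \<Rightarrow> (nat \<Rightarrow> nat \<Rightarrow> 'a) \<Rightarrow> (nat \<Rightarrow> nat) \<Rightarrow> (nat \<Rightarrow> 'a) \<Rightarrow> (nat \<Rightarrow> 'a) \<Rightarrow> 'a::comm_ring_1 mat" where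
  "class_mat n h cl w d = mat n n (\<lambda>(x,y). w x * h (cl x) (cl y) + (if x = y then d x else 0))"

lemma class_mat_carrier [simp]: "class_mat n h cl w d \<in> carrier_mat n n"
  by (simp add: class_mat_def)

lemma class_mat_cong_weight:
  assumes "\<And>x. x < n \<Longrightarrow> w x = w' x"
  shows "class_mat n h cl w d = class_mat n h cl w' d"
  using assms by (auto simp: class_mat_def intro!: eq_matI)

lemma char_poly_class_mat_merge_last:
  fixes h :: "nat \<Rightarrow> nat \<Rightarrow> 'a::idom"
  assumes u: "u < m" "cl u = cl m" and d: "d u = 0" "d m = 0"
  shows "char_poly (class_mat (Suc m) h cl w d) = [:0,1:] * char_poly (class_mat m h cl (w(u := w u + w m)) d)"
proof -
  let ?n = "Suc m"
  \<comment> \<open>Column \<open>m\<close> equals column \<open>u\<close>; conjugating by the elementary matrices \<open>T\<close> (add row \<open>m\<close> to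
    row \<open>u\<close>) and \<open>S = T\<inverse>\<close> clears column \<open>m\<close> and moves the weight of \<open>m\<close> onto \<open>u\<close>.\<close>
  define A where "A = class_mat ?n h cl w d"
  define S :: "'a mat" where "S = mat ?n ?n (\<lambda>(i,j). (if i = j then 1 else 0) + (if i = u \<and> j = m then -1 else 0))"
  define T :: "'a mat" where "T = mat ?n ?n (\<lambda>(i,j). (if i = j then 1 else 0) + (if i = u \<and> j = m then 1 else 0))"
  define B :: "'a mat" where "B = mat ?n ?n (\<lambda>(i,j). if j = m then 0 else A $$ (i,j) + (if i = u then A $$ (m,j) else 0))"
  have A: "A \<in> carrier_mat ?n ?n" by (simp add: A_def)
  have S: "S \<in> carrier_mat ?n ?n" and T: "T \<in> carrier_mat ?n ?n" and B: "B \<in> carrier_mat ?n ?n"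
    by (simp_all add: S_def T_def B_def)
  have col_m: "A $$ (i, m) = A $$ (i, u)" if "i < ?n" for i
    using that u d by (auto simp: A_def class_mat_def)
  have TA: "T * A = mat ?n ?n (\<lambda>(i,j). A $$ (i,j) + (if i = u then A $$ (m,j) else 0))"
    by (rule eq_matI) (use A u in \<open>auto simp: T_def scalar_prod_def sum.distrib if_distrib[of "\<lambda>x. x * _"] sum.delta cong: if_cong\<close>)
  have TAS: "T * A * S = B"
    unfolding TA
    by (rule eq_matI) (use A u col_m in \<open>auto simp: S_def B_def scalar_prod_def if_distrib[of "\<lambda>x. _ * x"] sum.delta cong: if_cong\<close>)
  have ST: "S * T = 1\<^sub>m ?n" and TS: "T * S = 1\<^sub>m ?n"
    by (rule eq_matI; use u in \<open>auto simp: S_def T_def scalar_prod_def sum.distrib if_distrib[of "\<lambda>x. _ * x"] sum.delta cong: if_cong\<close>)+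
  have "A = S * B * T"
  proof -
    have "S * B * T = (S * T) * A * (S * T)"
      using A S T by (simp add: TAS[symmetric] assoc_mult_mat[of _ ?n ?n _ ?n _ ?n])
    then show ?thesis using A by (simp add: ST)
  qed
  then have "similar_mat A B"
    by (intro similar_matI[of _ _ S T ?n]) (use A B S T ST TS in auto)
  then have "char_poly A = char_poly B" by (rule char_poly_similar)
  also have "\<dots> = monom 1 1 * char_poly (mat_delete B m m)"
    by (rule char_poly_0_column[OF _ B]) (auto simp: B_def)
  also have "mat_delete B m m = class_mat m h cl (w(u := w u + w m)) d"
    by (rule eq_matI) (use u in \<open>auto simp: mat_delete_def B_def A_def class_mat_def algebra_simps\<close>)
  finally show ?thesis by (simp add: A_def x_as_monom)
qed

lemma sum_fibre_merge_last:
  assumes "u < n" "cl u = cl n"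
  shows "(\<Sum>x | x < n \<and> cl x = c. (w(u := w u + w n)) x) = (\<Sum>x | x < Suc n \<and> cl x = c. w x)"
proof -
  have "{x. x < Suc n \<and> cl x = c} = {x. x < n \<and> cl x = c} \<union> (if cl n = c then {n} else {})"
    by (auto simp: less_Suc_eq)
  moreover have "w(u := w u + w n) = (\<lambda>x. w x + (if x = u then w n else 0))"
    by auto
  ultimately show ?thesis
    using assms by (simp add: sum.union_disjoint sum.distrib)
qed

lemma char_poly_class_mat_quotient:
  fixes h :: "nat \<Rightarrow> nat \<Rightarrow> 'a::idom"
  assumes "m \<le> n" "\<And>x. x < m \<Longrightarrow> cl x = x" "\<And>x. x < n \<Longrightarrow> cl x < m"
    and "\<And>x. m \<le> x \<Longrightarrow> x < n \<Longrightarrow> d x = 0 \<and> d (cl x) = 0"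
  shows "char_poly (class_mat n h cl w d) =
    [:0,1:] ^ (n - m) * char_poly (class_mat m h cl (\<lambda>c. \<Sum>x | x < n \<and> cl x = c. w x) d)"
  using assms
proof (induction n arbitrary: w)
  case 0
  then show ?case by (auto intro!: arg_cong[where f = char_poly] class_mat_cong_weight)
next
  case (Suc n)
  show ?case
  proof (cases "m = Suc n")
    case True
    have "{y. y < Suc n \<and> cl y = x} = {x}" if "x < m" for x
      using Suc.prems True that by auto
    then show ?thesis
      using True by (auto intro!: arg_cong[where f = char_poly] class_mat_cong_weight)
  next
    case False
    then have mn: "m \<le> n" using Suc.prems by auto
    define u where "u = cl n"
    have "u < m" using Suc.prems by (simp add: u_def)
    moreover have "d n = 0" "d u = 0"
      using Suc.prems(4)[of n] mn by (simp_all add: u_def)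
    ultimately have u: "u < n" "cl u = cl n" "d u = 0" "d n = 0"
      using Suc.prems mn by (auto simp: u_def[symmetric])
    define w' where "w' = w(u := w u + w n)"
    have "char_poly (class_mat (Suc n) h cl w d) = [:0,1:] * char_poly (class_mat n h cl w' d)"
      unfolding w'_def by (rule char_poly_class_mat_merge_last) (use u in auto)
    also have "char_poly (class_mat n h cl w' d) =
        [:0,1:] ^ (n - m) * char_poly (class_mat m h cl (\<lambda>c. \<Sum>x | x < n \<and> cl x = c. w' x) d)"
      by (rule Suc.IH) (use Suc.prems mn in auto)
    also have "class_mat m h cl (\<lambda>c. \<Sum>x | x < n \<and> cl x = c. w' x) d =
        class_mat m h cl (\<lambda>c. \<Sum>x | x < Suc n \<and> cl x = c. w x) d"
      by (simp only: w'_def sum_fibre_merge_last[OF u(1,2)])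
    finally show ?thesis using mn by (simp add: Suc_diff_le)
  qed
qed

text \<open>The \<open>k\<close>-fold blow-up of \<open>Kloop (2*q) q\<close>: the \<open>q\<close> looped vertices become one looped clique
  (class \<open>0\<close>: vertex \<open>0\<close> and the vertices above \<open>qk\<close>), each loopless vertex becomes an
  independent set of size \<open>k\<close> (class \<open>c + 1\<close>: the vertices \<open>c + 1 + iq\<close>, \<open>i < k\<close>). The classes are
  numbered so that vertex \<open>c \<le> q\<close> represents class \<open>c\<close>.\<close>

definition blowup_class :: "nat \<Rightarrow> nat \<Rightarrow> nat \<Rightarrow> nat" where
  "blowup_class q k x = (if 0 < x \<and> x \<le> q * k then Suc ((x - 1) mod q) else 0)"

definition blowup_adj :: "nat \<Rightarrow> nat \<Rightarrow> real" where
  "blowup_adj c c' = (if c = c' \<and> c \<noteq> 0 then 0 else 1)"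

definition Kloop_blowup :: "nat \<Rightarrow> nat \<Rightarrow> real mat" where
  "Kloop_blowup q k = class_mat (2*q*k) blowup_adj (blowup_class q k) (\<lambda>_. 1) (\<lambda>_. 0)"

lemma blowup_class_less: "0 < q \<Longrightarrow> blowup_class q k x < Suc q"
  by (simp add: blowup_class_def)

lemma blowup_class_id: "x \<le> q \<Longrightarrow> 1 \<le> k \<Longrightarrow> blowup_class q k x = x"
  by (cases x) (auto simp: blowup_class_def intro: order.trans[of _ q])

lemma card_blowup_class_Suc:
  assumes "1 \<le> k" "c < q"
  shows "card {x. x < 2*q*k \<and> blowup_class q k x = Suc c} = k"
proof -
  have "{x. x < 2*q*k \<and> blowup_class q k x = Suc c} = (\<lambda>i. Suc c + i * q) ` {..<k}"
  proof (intro equalityI subsetI)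
    fix x assume x: "x \<in> {x. x < 2*q*k \<and> blowup_class q k x = Suc c}"
    then have "0 < x" "x - 1 < q * k" "(x - 1) mod q = c"
      by (auto simp: blowup_class_def split: if_splits)
    moreover have "x - 1 = (x - 1) div q * q + (x - 1) mod q"
      by simp
    moreover have "(x - 1) div q < k"
      using calculation assms by (simp add: div_less_iff_less_mult mult.commute)
    ultimately show "x \<in> (\<lambda>i. Suc c + i * q) ` {..<k}"
      by (intro image_eqI[of _ _ "(x - 1) div q"]) auto
  next
    fix x assume "x \<in> (\<lambda>i. Suc c + i * q) ` {..<k}"
    then obtain i where i: "i < k" and x: "x = Suc c + i * q" by auto
    have "Suc i * q \<le> k * q" using i by (intro mult_le_mono1) simp
    then have "x \<le> q * k" using x assms by (simp add: mult.commute)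
    moreover have "q * k < 2 * q * k" using assms by simp
    moreover have "(x - 1) mod q = c" using x assms by simp
    ultimately show "x \<in> {x. x < 2*q*k \<and> blowup_class q k x = Suc c}"
      using x by (simp add: blowup_class_def)
  qed
  moreover have "inj_on (\<lambda>i. Suc c + i * q) {..<k}"
    using assms by (auto simp: inj_on_def)
  ultimately show ?thesis by (simp add: card_image)
qed

lemma card_blowup_class_0:
  assumes "1 \<le> k" "1 \<le> q"
  shows "card {x. x < 2*q*k \<and> blowup_class q k x = 0} = q * k"
proof -
  have "{x. x < 2*q*k \<and> blowup_class q k x = 0} = insert 0 {q*k<..<2*q*k}"
    using assms by (auto simp: blowup_class_def)
  moreover have "1 \<le> q * k" using assms by simp
  ultimately show ?thesis by simp
qed

definition blowup_quotient :: "nat \<Rightarrow> nat \<Rightarrow> real mat" where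
  "blowup_quotient q k =
    class_mat (Suc q) blowup_adj (blowup_class q k) (\<lambda>c. if c = 0 then real q * real k else real k) (\<lambda>_. 0)"

lemma char_poly_Kloop_blowup:
  assumes q: "1 \<le> q" and k: "1 \<le> k"
  shows "char_poly (Kloop_blowup q k) = [:0,1:] ^ (2*q*k - Suc q) * char_poly (blowup_quotient q k)"
proof -
  have "q \<le> q * k" "1 \<le> q * k" using q k by simp_all
  then have "Suc q \<le> 2 * q * k" by linarith
  then have "char_poly (Kloop_blowup q k) = [:0,1:] ^ (2*q*k - Suc q) *
      char_poly (class_mat (Suc q) blowup_adj (blowup_class q k)
        (\<lambda>c. \<Sum>x | x < 2*q*k \<and> blowup_class q k x = c. 1) (\<lambda>_. 0))"
    unfolding Kloop_blowup_def
    by (intro char_poly_class_mat_quotient) (use q k blowup_class_less blowup_class_id in auto)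
  also have "class_mat (Suc q) blowup_adj (blowup_class q k)
      (\<lambda>c. \<Sum>x | x < 2*q*k \<and> blowup_class q k x = c. 1) (\<lambda>_. 0) = blowup_quotient q k"
    unfolding blowup_quotient_def
  proof (rule class_mat_cong_weight)
    fix c assume "c < Suc q"
    then show "(\<Sum>x | x < 2*q*k \<and> blowup_class q k x = c. 1) = (if c = 0 then real q * real k else real k)"
      using card_blowup_class_0[OF k q] card_blowup_class_Suc[OF k, of "c - 1" q]
      by (cases c) auto
  qed
  finally show ?thesis .
qed

lemma poly_char_poly_blowup_quotient:
  assumes q: "1 \<le> q" and k: "1 \<le> k"
  shows "poly (char_poly (blowup_quotient q k)) e =
    (e + real k) ^ (q - 1) * (e\<^sup>2 - (2 * real q - 1) * real k * e - real q * (real k)\<^sup>2)"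
proof -
  define W :: "nat \<Rightarrow> real" where "W = (\<lambda>c. if c = 0 then real q * real k else real k)"
  define Q where "Q = blowup_quotient q k"
  define R where "R = class_mat 2 (\<lambda>_ _. 1) (\<lambda>x. min x 1) (\<lambda>_. q * k) (\<lambda>x. if x = 0 then real k else 0)"
  \<comment> \<open>After the shift the loopless classes \<open>1, \<dots>, q\<close> become mutual twins as well.\<close>
  have "Q + real k \<cdot>\<^sub>m 1\<^sub>m (Suc q) =
      class_mat (Suc q) (\<lambda>_ _. 1) (\<lambda>x. min x 1) W (\<lambda>x. if x = 0 then real k else 0)"
    by (rule eq_matI)
      (use k in \<open>auto simp: Q_def blowup_quotient_def class_mat_def W_def blowup_adj_def blowup_class_id less_Suc_eq_le\<close>)
  also have "char_poly \<dots> = [:0,1:] ^ (q - 1) *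
      char_poly (class_mat 2 (\<lambda>_ _. 1) (\<lambda>x. min x 1) (\<lambda>c. \<Sum>x | x < Suc q \<and> min x 1 = c. W x)
        (\<lambda>x. if x = 0 then real k else 0))"
    by (subst char_poly_class_mat_quotient[where m = 2]) (use q in auto)
  also have "class_mat 2 (\<lambda>_ _. 1) (\<lambda>x. min x 1) (\<lambda>c. \<Sum>x | x < Suc q \<and> min x 1 = c. W x)
      (\<lambda>x. if x = 0 then real k else 0) = R"
    unfolding R_def
  proof (rule class_mat_cong_weight)
    fix c :: nat assume "c < 2"
    then have "{x. x < Suc q \<and> min x 1 = c} = (if c = 0 then {0} else {1..q})"
      by auto
    then show "(\<Sum>x | x < Suc q \<and> min x 1 = c. W x) = q * k"
      by (simp add: W_def)
  qed
  finally have reduce_shift: "char_poly (Q + real k \<cdot>\<^sub>m 1\<^sub>m (Suc q)) = [:0,1:] ^ (q - 1) * char_poly R" .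
  have poly_R: "poly (char_poly R) z = (z - q * k - k) * (z - q * k) - (q * k)\<^sup>2" for z
  proof -
    have R: "R \<in> carrier_mat 2 2" by (simp add: R_def)
    have "- char_matrix R z = mat 2 2 (\<lambda>(i,j). (if i = j then z else 0) - R $$ (i,j))"
      by (rule eq_matI) (auto simp: char_matrix_def R_def class_mat_def)
    then show ?thesis
      by (simp add: char_poly_matrix[OF R] det_mat_2) (simp add: R_def class_mat_def power2_eq_square algebra_simps)
  qed
  have "poly (char_poly Q) e = poly (char_poly (Q + real k \<cdot>\<^sub>m 1\<^sub>m (Suc q))) (e + k)"
    by (simp add: char_poly_add_smult_one_mat[of _ "Suc q"] Q_def blowup_quotient_def poly_pcompose)
  also have "\<dots> = (e + real k) ^ (q - 1) * (e\<^sup>2 - (2 * real q - 1) * real k * e - real q * (real k)\<^sup>2)"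
    unfolding reduce_shift poly_mult poly_R by (simp add: power2_eq_square algebra_simps)
  finally show ?thesis by (simp add: Q_def)
qed

lemma eigs_Kloop_blowup:
  assumes q: "1 \<le> q" and k: "1 \<le> k"
  defines "s \<equiv> sqrt (4 * (real q)\<^sup>2 + 1)"
  shows "eigs (Kloop_blowup q k) =
    real k * (2 * real q - 1 + s) / 2 # replicate (2*q*k - Suc q) 0 @
    real k * (2 * real q - 1 - s) / 2 # replicate (q - 1) (- real k)"
proof -
  define r1 where "r1 = real k * (2 * real q - 1 + s) / 2"
  define r2 where "r2 = real k * (2 * real q - 1 - s) / 2"
  define xs where "xs = replicate (q - 1) (- real k) @ r2 # replicate (2*q*k - Suc q) 0 @ [r1]"
  have s2: "s\<^sup>2 = 4 * (real q)\<^sup>2 + 1" by (simp add: s_def)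
  have sum: "r1 + r2 = (2 * real q - 1) * real k"
    by (simp add: r1_def r2_def field_simps)
  have "r1 * r2 = (real k)\<^sup>2 * ((2 * real q - 1)\<^sup>2 - s\<^sup>2) / 4"
    by (simp add: r1_def r2_def power2_eq_square algebra_simps)
  then have prod: "r1 * r2 = - real q * (real k)\<^sup>2"
    unfolding s2 by (simp add: power2_eq_square algebra_simps)
  have "poly (char_poly (Kloop_blowup q k)) e = (\<Prod>a\<leftarrow>xs. e - a)" for e
  proof -
    have "(e - r1) * (e - r2) = e\<^sup>2 - (r1 + r2) * e + r1 * r2"
      by (simp add: power2_eq_square algebra_simps)
    then have "(e - r1) * (e - r2) = e\<^sup>2 - (2 * real q - 1) * real k * e - real q * (real k)\<^sup>2"
      unfolding sum prod by simp
    moreover have "(\<Prod>a\<leftarrow>xs. e - a) = e ^ (2*q*k - Suc q) * (e + real k) ^ (q - 1) * ((e - r1) * (e - r2))"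
      by (simp add: xs_def prod_list_replicate mult_ac)
    ultimately show ?thesis
      by (simp add: char_poly_Kloop_blowup[OF q k] poly_char_poly_blowup_quotient[OF q k])
  qed
  then have "eigs (Kloop_blowup q k) = rev (sort xs)" by (rule eigs_eqI)
  moreover have "sorted xs"
  proof -
    have "s \<le> 2 * real q + 1" unfolding s_def
      by (rule real_le_lsqrt) (auto simp: power2_eq_square algebra_simps)
    moreover have "2 * real q - 1 \<le> s" unfolding s_def
      by (rule real_le_rsqrt) (auto simp: power2_eq_square algebra_simps)
    ultimately have "0 \<le> real k * (2 * real q + 1 - s) / 2" "0 \<le> real k * (s - (2 * real q - 1)) / 2"
        "0 \<le> real k * (2 * real q - 1 + s) / 2"
      using q by simp_all
    moreover have "r2 + real k = real k * (2 * real q + 1 - s) / 2" "- r2 = real k * (s - (2 * real q - 1)) / 2"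
      by (simp_all add: r2_def field_simps)
    ultimately have "- real k \<le> r2" "r2 \<le> 0" "0 \<le> r1"
      by (simp_all add: r1_def)
    then show ?thesis by (auto simp: xs_def sorted_append)
  qed
  ultimately have "eigs (Kloop_blowup q k) = rev xs" by (simp add: sorted_sort_id)
  then show ?thesis by (simp add: xs_def r1_def r2_def)
qed

lemma Kloop_blowup_spread:
  assumes q: "2 \<le> q" and k: "1 \<le> k"
  shows "lam (Kloop_blowup q k) 1 - lam (Kloop_blowup q k) (2*q*k - (q - 2)) =
    real k * (2 * real q + 1 + sqrt (4 * (real q)\<^sup>2 + 1)) / 2"
proof -
  have eigs: "eigs (Kloop_blowup q k) =
    real k * (2 * real q - 1 + sqrt (4 * (real q)\<^sup>2 + 1)) / 2 # replicate (2*q*k - Suc q) 0 @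
    real k * (2 * real q - 1 - sqrt (4 * (real q)\<^sup>2 + 1)) / 2 # replicate (q - 1) (- real k)"
    using q k by (intro eigs_Kloop_blowup) simp_all
  have "q \<le> q * k" "1 \<le> q * k" using q k by simp_all
  then have "Suc q \<le> 2*q*k" by linarith
  then have i: "2*q*k - (q - 2) - 1 = Suc (Suc (2*q*k - Suc q))"
    using q by linarith
  have "lam (Kloop_blowup q k) (2*q*k - (q - 2)) = - real k"
    unfolding lam_def eigs i using q by (simp add: nth_append)
  then show ?thesis
    by (simp add: lam_def eigs field_simps)
qed

lemma eigs_Kloop_eq_Kloop_blowup_1:
  assumes q: "1 \<le> q"
  shows "eigs (Kloop (2*q) q) = eigs (Kloop_blowup q 1)"
proof -
  \<comment> \<open>\<open>\<sigma>\<close> sends the loopless vertices \<open>1, \<dots>, q\<close> of the blow-up to those of \<open>Kloop\<close>.\<close>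
  define \<sigma> where "\<sigma> = (\<lambda>x::nat. if x = 0 then 0 else if x \<le> q then q + x - 1 else x - q)"
  define \<tau> where "\<tau> = (\<lambda>y::nat. if y = 0 then 0 else if y < q then y + q else y - q + 1)"
  have \<sigma>: "bij_betw \<sigma> {..<2*q} {..<2*q}"
    by (rule bij_betw_byWitness[of _ \<tau>]) (use q in \<open>auto simp: \<sigma>_def \<tau>_def\<close>)
  have "Kloop_blowup q 1 = mat (2*q) (2*q) (\<lambda>(x,y). Kloop (2*q) q $$ (\<sigma> x, \<sigma> y))"
  proof (rule eq_matI)
    fix x y assume "x < dim_row (mat (2*q) (2*q) (\<lambda>(x,y). Kloop (2*q) q $$ (\<sigma> x, \<sigma> y)))"
      and "y < dim_col (mat (2*q) (2*q) (\<lambda>(x,y). Kloop (2*q) q $$ (\<sigma> x, \<sigma> y)))"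
    then have xy: "x < 2*q" "y < 2*q" by auto
    then have "\<sigma> x < 2*q" "\<sigma> y < 2*q" "\<sigma> x = \<sigma> y \<longleftrightarrow> x = y"
      using \<sigma> by (auto simp: bij_betw_def inj_on_def)
    then have "Kloop (2*q) q $$ (\<sigma> x, \<sigma> y) = (if x = y \<and> q \<le> \<sigma> x then 0 else 1)"
      by (simp add: Kloop_def)
    also have "q \<le> \<sigma> x \<longleftrightarrow> 0 < x \<and> x \<le> q"
      using xy by (auto simp: \<sigma>_def)
    also have "(if x = y \<and> 0 < x \<and> x \<le> q then 0 else 1) = Kloop_blowup q 1 $$ (x,y)"
      using xy by (auto simp: Kloop_blowup_def class_mat_def blowup_adj_def blowup_class_def)
    finally show "Kloop_blowup q 1 $$ (x,y) = mat (2*q) (2*q) (\<lambda>(x,y). Kloop (2*q) q $$ (\<sigma> x, \<sigma> y)) $$ (x,y)"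
      using xy by simp
  qed (auto simp: Kloop_blowup_def class_mat_def)
  then have "char_poly (Kloop_blowup q 1) = char_poly (Kloop (2*q) q)"
    using char_poly_permute_mat[OF _ \<sigma>, of "Kloop (2*q) q"] by (simp add: Kloop_def)
  then show ?thesis by (simp add: eigs_def)
qed

lemma looped_graph_mat_Kloop_blowup: "looped_graph_mat (2*q*k) (Kloop_blowup q k)"
  by (auto simp: looped_graph_mat_def Kloop_blowup_def class_mat_def blowup_adj_def intro!: eq_matI)

lemma finite_looped_graph_mat: "finite {A. looped_graph_mat n A}"
proof -
  have "{A. looped_graph_mat n A} \<subseteq> (\<lambda>f. mat n n f) ` ({..<n} \<times> {..<n} \<rightarrow>\<^sub>E ({0,1} :: real set))"
  proof
    fix A assume "A \<in> {A. looped_graph_mat n A}"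
    then have A: "A \<in> carrier_mat n n" and entries: "\<forall>a<n. \<forall>b<n. A $$ (a, b) = 0 \<or> A $$ (a, b) = 1"
      by (auto simp: looped_graph_mat_def)
    define f where "f = restrict (\<lambda>ij. A $$ ij) ({..<n} \<times> {..<n})"
    have "A = mat n n f" using A by (auto simp: f_def intro!: eq_matI)
    moreover have "f \<in> {..<n} \<times> {..<n} \<rightarrow>\<^sub>E {0,1}"
      using entries by (auto simp: f_def)
    ultimately show "A \<in> (\<lambda>f. mat n n f) ` ({..<n} \<times> {..<n} \<rightarrow>\<^sub>E {0,1})" by blast
  qed
  then show ?thesis by (rule finite_subset) (intro finite_imageI finite_PiE; simp)
qed

lemma spread_ij_le_spread_loop_n: "looped_graph_mat n A \<Longrightarrow> spread_ij i j A \<le> spread_loop_n i j n"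
  unfolding spread_loop_n_def by (rule Max_ge) (auto simp: finite_looped_graph_mat)

lemma LIMSEQ_le_const_multiples:
  fixes a :: "nat \<Rightarrow> real"
  assumes lim: "a \<longlonglongrightarrow> L" and p: "0 < p" and bound: "\<And>k. 1 \<le> k \<Longrightarrow> c \<le> a (p * k)"
  shows "c \<le> L"
proof -
  have "strict_mono (\<lambda>k. p * Suc k)" using p by (intro strict_monoI) simp
  then have "(\<lambda>k. a (p * Suc k)) \<longlonglongrightarrow> L"
    using LIMSEQ_subseq_LIMSEQ[OF lim] by (simp add: comp_def)
  then show ?thesis
    by (rule LIMSEQ_le_const) (intro exI[of _ 0] allI impI bound, simp)
qed

lemma spread_ij_Kloop_blowup:
  assumes "1 \<le> k"
  shows "spread_ij 0 j (Kloop_blowup (j+2) k) =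
    real k * ((2*real j+5) + sqrt (4*real j^2 + 16*real j + 17)) / 2"
proof -
  have "dim_row (Kloop_blowup (j+2) k) - j = 2*(j+2)*k - (j + 2 - 2)"
    by (simp add: Kloop_blowup_def class_mat_def)
  moreover have "4 * (real (j+2))\<^sup>2 + 1 = 4*real j^2 + 16*real j + 17"
    by (simp add: power2_eq_square algebra_simps)
  ultimately show ?thesis
    using Kloop_blowup_spread[of "j+2", OF _ assms] by (simp add: spread_ij_def algebra_simps)
qed

lemma spread_loop_n_ge_Kloop_blowup:
  assumes k: "1 \<le> k"
  shows "((2*real j+5) + sqrt (4*real j^2 + 16*real j + 17)) / (4*(real j+2))
    \<le> spread_loop_n 0 j (2*(j+2)*k) / real (2*(j+2)*k)"
proof -
  define \<rho> where "\<rho> = ((2*real j+5) + sqrt (4*real j^2 + 16*real j + 17)) / 2"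
  have "spread_ij 0 j (Kloop_blowup (j+2) k) \<le> spread_loop_n 0 j (2*(j+2)*k)"
    by (rule spread_ij_le_spread_loop_n[OF looped_graph_mat_Kloop_blowup])
  then have "real k * \<rho> \<le> spread_loop_n 0 j (2*(j+2)*k)"
    using spread_ij_Kloop_blowup[OF k, of j] by (simp add: \<rho>_def)
  then have "real k * \<rho> / real (2*(j+2)*k) \<le> spread_loop_n 0 j (2*(j+2)*k) / real (2*(j+2)*k)"
    by (rule divide_right_mono) simp
  moreover have "real k * \<rho> / real (2*(j+2)*k) = \<rho> / (2 * real (j+2))"
  proof -
    have "real (2*(j+2)*k) = real k * (2 * real (j+2))" by (simp add: algebra_simps)
    then show ?thesis using k by simp
  qed
  moreover have "\<rho> / (2 * real (j+2)) = ((2*real j+5) + sqrt (4*real j^2 + 16*real j + 17)) / (4*(real j+2))"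
    by (simp add: \<rho>_def)
  ultimately show ?thesis by simp
qed

theorem mainTheorem10:
  fixes j :: nat
  assumes j1: "j \<ge> 1"
    and s_exists: "convergent (\<lambda>n. spread_n 0 j n / real n)"
    and s_loop: "(\<lambda>n. spread_loop_n 0 j n / real n) \<longlonglongrightarrow> s_ij 0 j"
  shows "lam (Kloop (2*j+4) (j+2)) 1 - lam (Kloop (2*j+4) (j+2)) ((2*j+4) - j)
           = ((2*real j+5) + sqrt (4*real j^2 + 16*real j + 17)) / 2
         \<and> s_ij 0 j \<ge> ((2*real j+5) + sqrt (4*real j^2 + 16*real j + 17)) / (4*(real j+2))"
proof
  have "2*j+4 = 2*(j+2)" by simp
  then have "eigs (Kloop (2*j+4) (j+2)) = eigs (Kloop_blowup (j+2) 1)"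
    using eigs_Kloop_eq_Kloop_blowup_1[of "j+2"] by (simp only:)
  then show "lam (Kloop (2*j+4) (j+2)) 1 - lam (Kloop (2*j+4) (j+2)) ((2*j+4) - j)
           = ((2*real j+5) + sqrt (4*real j^2 + 16*real j + 17)) / 2"
    using spread_ij_Kloop_blowup[of 1 j]
    by (simp add: spread_ij_def lam_def Kloop_blowup_def class_mat_def algebra_simps)
  show "s_ij 0 j \<ge> ((2*real j+5) + sqrt (4*real j^2 + 16*real j + 17)) / (4*(real j+2))"
  proof (rule LIMSEQ_le_const_multiples[OF s_loop, of "2*(j+2)"])
    show "0 < 2*(j+2)" by simp
  qed (rule spread_loop_n_ge_Kloop_blowup)
qed

end
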